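(* Let $0<p<\infty$, $\alpha>1$, and let $\beta$ be real with $\beta p<-1$ and $\nu:=-(\alpha+\beta+\frac1p)>0$. Let $K>1$ be sufficiently large, $\delta_n=K^{-n}$, $f_n(z)=\delta_n^\nu(1+\delta_n-z)^\beta$ ($z\in\mathbb{D}$), and $X_{\nu,\beta}=\{\sum_{n=1}^\infty a_nf_n:(a_n)\in\ell_\infty\}$. Let $(\varphi_t)$ be a semigroup of analytic functions with Denjoy–Wolff point $1$, whose infinitesimal generator is $G(z)=(1-z)^2P(z)$ with $P$ analytic on $\mathbb{D}$ and $\mathrm{Re}\,P\ge0$, and let $E=\{h\in H(p,\infty,\alpha):(1-z)^2P(z)h'(z)\in H(p,\infty,\alpha)\}$. Then $X_{\nu,\beta}\subseteq E$.
   Context: $\mathbb{D}$ is the unit disk; powers use the principal branch. A semigroup of analytic functions is a family $\{\varphi_t:t\ge0\}$ of analytic self-maps of $\mathbb{D}$ with $\varphi_0=\mathrm{id}$, $\varphi_{t+s}=\varphi_t\circ\varphi_s$, $\varphi_t\to\varphi_0$ locally uniformly as $t\to0^+$; its infinitesimal generator is $G(z)=\lim_{t\to0^+}(\varphi_t(z)-z)/t$. $M_p(r,f)=\left(\int_0^{2\pi}|f(re^{i\theta})|^p\frac{d\theta}{2\pi}\right)^{1/p}$; $H(p,\infty,\alpha)$ is the space of analytic $f$ on $\mathbb{D}$ with $\sup_{0\le r<1}(1-r)^\alpha M_p(r,f)<\infty$. *)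

theory Defs
  imports "HOL-Complex_Analysis.Complex_Analysis"
begin

abbreviation unit_disc :: "complex set" where "unit_disc \<equiv> ball 0 1"

definition analytic_semigroup :: "(real \<Rightarrow> complex \<Rightarrow> complex) \<Rightarrow> bool" where
  "analytic_semigroup \<phi> \<longleftrightarrow>
     (\<forall>t\<ge>0. \<phi> t holomorphic_on unit_disc \<and> \<phi> t ` unit_disc \<subseteq> unit_disc) \<and>
     (\<forall>z\<in>unit_disc. \<phi> 0 z = z) \<and>
     (\<forall>t\<ge>0. \<forall>s\<ge>0. \<forall>z\<in>unit_disc. \<phi> (t + s) z = \<phi> t (\<phi> s z)) \<and>
     (\<forall>C. compact C \<and> C \<subseteq> unit_disc \<longrightarrow> uniform_limit C \<phi> (\<phi> 0) (at_right 0))"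

definition infinitesimal_generator :: "(real \<Rightarrow> complex \<Rightarrow> complex) \<Rightarrow> (complex \<Rightarrow> complex) \<Rightarrow> bool" where
  "infinitesimal_generator \<phi> G \<longleftrightarrow>
     (\<forall>z\<in>unit_disc. ((\<lambda>t. (\<phi> t z - z) / complex_of_real t) \<longlongrightarrow> G z) (at_right 0))"

definition denjoy_wolff_point :: "(real \<Rightarrow> complex \<Rightarrow> complex) \<Rightarrow> complex \<Rightarrow> bool" where
  "denjoy_wolff_point \<phi> \<tau> \<longleftrightarrow> \<tau> \<in> cball 0 1 \<and>
     (\<forall>z\<in>unit_disc. ((\<lambda>t. \<phi> t z) \<longlongrightarrow> \<tau>) at_top)"

definition Mp :: "real \<Rightarrow> real \<Rightarrow> (complex \<Rightarrow> complex) \<Rightarrow> real" where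
  "Mp p r f = (integral {0..2*pi} (\<lambda>\<theta>. norm (f (complex_of_real r * cis \<theta>)) powr p) / (2*pi)) powr (1/p)"

definition H_p_inf :: "real \<Rightarrow> real \<Rightarrow> (complex \<Rightarrow> complex) set" where
  "H_p_inf p \<alpha> = {f. f holomorphic_on unit_disc \<and>
      (\<exists>C. \<forall>r. 0 \<le> r \<and> r < 1 \<longrightarrow> (1 - r) powr \<alpha> * Mp p r f \<le> C)}"

definition delta_seq :: "real \<Rightarrow> nat \<Rightarrow> real" where
  "delta_seq K n = K powr (- real n)"

definition f_seq :: "real \<Rightarrow> real \<Rightarrow> real \<Rightarrow> nat \<Rightarrow> complex \<Rightarrow> complex" where
  "f_seq K \<nu> \<beta> n z = complex_of_real (delta_seq K n powr \<nu>)
      * (complex_of_real (1 + delta_seq K n) - z) powr complex_of_real \<beta>"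

definition X_space :: "real \<Rightarrow> real \<Rightarrow> real \<Rightarrow> (complex \<Rightarrow> complex) set" where
  "X_space K \<nu> \<beta> = {h. \<exists>a :: nat \<Rightarrow> complex. bounded (range a) \<and>
      (\<forall>z\<in>unit_disc. (\<lambda>n. a (Suc n) * f_seq K \<nu> \<beta> (Suc n) z) sums h z)}"

definition E_space :: "real \<Rightarrow> real \<Rightarrow> (complex \<Rightarrow> complex) \<Rightarrow> (complex \<Rightarrow> complex) set" where
  "E_space p \<alpha> P = {h. h \<in> H_p_inf p \<alpha> \<and>
      (\<lambda>z. (1 - z)^2 * P z * deriv h z) \<in> H_p_inf p \<alpha>}"

end

theory Submission
  imports Defs
begin

text \<open>
  Since the \<open>\<delta>\<^sub>n = K\<^sup>-\<^sup>n\<close> are lacunary, at a point \<open>z\<close> only the terms of \<open>\<Sum> a\<^sub>n f\<^sub>n\<close> with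
  \<open>\<delta>\<^sub>n\<close> comparable to \<open>|1 - z|\<close> matter, the others decaying geometrically; this gives
  \<open>|h(z)| \<lesssim> |1 - z|\<^bsup>\<beta>+\<nu>\<^esup>\<close> and \<open>|h'(z)| \<lesssim> |1 - z|\<^bsup>\<beta>+\<nu>-1\<^esup>\<close> for \<open>h \<in> X\<^sub>\<nu>\<^sub>,\<^sub>\<beta>\<close>, where
  \<open>\<beta> + \<nu> = -(\<alpha> + 1/p)\<close>. A pointwise bound \<open>|F(z)| \<lesssim> |1 - z|\<^sup>-\<^sup>c\<close> with \<open>cp > 1\<close> integrates over
  the circle of radius \<open>r\<close> to \<open>M\<^sub>p(r, F) \<lesssim> (1 - r)\<^bsup>1/p - c\<^esup>\<close>, so \<open>h \<in> H(p,\<infinity>,\<alpha>)\<close>.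
  Schwarz's lemma turns \<open>Re P \<ge> 0\<close> into \<open>|P(z)| \<lesssim> (1 - |z|)\<^sup>-\<^sup>1\<close>, and the factor \<open>(1 - z)\<^sup>2\<close>
  gains more than this loses, so \<open>(1 - z)\<^sup>2 P h'\<close> is in \<open>H(p,\<infinity>,\<alpha>)\<close> as well.
\<close>

section \<open>Lacunary sums\<close>

lemma sum_power_inj_le:
  fixes q :: real and f :: "'a \<Rightarrow> nat"
  assumes "0 \<le> q" "q < 1" "finite A" "inj_on f A"
  shows "(\<Sum>n\<in>A. q ^ f n) \<le> 1 / (1 - q)"
proof -
  have "(\<Sum>n\<in>A. q ^ f n) = (\<Sum>k\<in>f ` A. q ^ k)"
    using assms(4) by (simp add: sum.reindex)
  also have "\<dots> \<le> (\<Sum>k. q ^ k)"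
    by (rule sum_le_suminf) (use assms in \<open>auto intro: summable_geometric\<close>)
  also have "\<dots> = 1 / (1 - q)"
    using assms by (simp add: suminf_geometric)
  finally show ?thesis .
qed

lemma sum_power_abs_diff_le:
  fixes q :: real and j :: int
  assumes "0 \<le> q" "q < 1"
  shows "(\<Sum>n<N. q ^ nat \<bar>int n - j\<bar>) \<le> 2 / (1 - q)"
proof -
  let ?A = "{n. n < N \<and> int n \<ge> j}" and ?B = "{n. n < N \<and> int n < j}"
  have "(\<Sum>n<N. q ^ nat \<bar>int n - j\<bar>) = (\<Sum>n\<in>?A \<union> ?B. q ^ nat \<bar>int n - j\<bar>)"
    by (rule sum.cong) auto
  also have "\<dots> = (\<Sum>n\<in>?A. q ^ nat \<bar>int n - j\<bar>) + (\<Sum>n\<in>?B. q ^ nat \<bar>int n - j\<bar>)"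
    by (rule sum.union_disjoint) auto
  also have "\<dots> \<le> 1 / (1 - q) + 1 / (1 - q)"
    by (intro add_mono sum_power_inj_le) (use assms in \<open>auto simp: inj_on_def\<close>)
  finally show ?thesis by simp
qed

lemma powr_mult_one_plus_powr_le:
  fixes x \<nu> b :: real
  assumes "x > 0" "b < 0"
  shows "x powr \<nu> * (1 + x) powr b \<le> x powr \<nu>"
    and "x powr \<nu> * (1 + x) powr b \<le> x powr (b + \<nu>)"
proof -
  have "(1 + x) powr b \<le> (1 + x) powr 0"
    using assms by (intro powr_mono) auto
  then show "x powr \<nu> * (1 + x) powr b \<le> x powr \<nu>"
    using assms by (simp add: mult_left_le)
  have "(1 + x) powr b \<le> x powr b"
    using assms by (intro powr_mono2') auto
  then have "x powr \<nu> * (1 + x) powr b \<le> x powr \<nu> * x powr b"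
    by (intro mult_left_mono) auto
  then show "x powr \<nu> * (1 + x) powr b \<le> x powr (b + \<nu>)"
    by (simp add: powr_add add.commute)
qed

lemma powr_mult_one_plus_powr_le_decay:
  fixes K x \<nu> b \<epsilon> :: real
  assumes "K > 1" "x > 0" "b < 0" "0 \<le> \<epsilon>" "\<epsilon> \<le> \<nu>" "\<epsilon> \<le> - (b + \<nu>)"
  shows "x powr \<nu> * (1 + x) powr b \<le> K powr (- \<epsilon> * \<bar>log K x\<bar>)"
proof -
  define u where "u = log K x"
  have x: "x = K powr u" using assms by (simp add: u_def)
  show ?thesis
  proof (cases "u \<le> 0")
    case True
    have "x powr \<nu> * (1 + x) powr b \<le> x powr \<nu>"
      using assms by (intro powr_mult_one_plus_powr_le) auto
    also have "\<dots> = K powr (- \<nu> * \<bar>u\<bar>)"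
      using True by (simp add: x powr_powr mult.commute)
    also have "\<dots> \<le> K powr (- \<epsilon> * \<bar>u\<bar>)"
      using assms by (intro powr_mono) (auto intro: mult_right_mono)
    finally show ?thesis by (simp add: u_def)
  next
    case False
    have "x powr \<nu> * (1 + x) powr b \<le> x powr (b + \<nu>)"
      using assms by (intro powr_mult_one_plus_powr_le) auto
    also have "\<dots> = K powr ((b + \<nu>) * \<bar>u\<bar>)"
      using False by (simp add: x powr_powr mult.commute)
    also have "\<dots> \<le> K powr (- \<epsilon> * \<bar>u\<bar>)"
      using assms by (intro powr_mono mult_right_mono) auto
    finally show ?thesis by (simp add: u_def)
  qed
qed

lemma delta_seq_pos: "K > 1 \<Longrightarrow> delta_seq K n > 0"
  by (simp add: delta_seq_def)

lemma delta_seq_powr: "K > 1 \<Longrightarrow> delta_seq K n powr \<nu> = (K powr (- \<nu>)) ^ n"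
  by (simp add: delta_seq_def powr_powr powr_realpow[symmetric] mult.commute)

lemma sum_lacunary_kernel_le:
  fixes K \<nu> b \<epsilon> d :: real
  assumes K: "K > 1" and \<epsilon>: "0 < \<epsilon>" "\<epsilon> \<le> \<nu>" "\<epsilon> \<le> - (b + \<nu>)" and d: "d > 0"
  defines "q \<equiv> K powr (- \<epsilon>)"
  shows "(\<Sum>n<N. delta_seq K (Suc n) powr \<nu> * (delta_seq K (Suc n) + d) powr b)
           \<le> 2 / (q * (1 - q)) * d powr (b + \<nu>)"
proof -
  \<comment> \<open>\<open>\<delta>\<^sub>n\<^sub>+\<^sub>1\<close> is comparable to \<open>d\<close> for \<open>n\<close> near \<open>j\<close>; the other terms decay geometrically in \<open>|n - j|\<close>.\<close>
  define j where "j = - \<lfloor>log K d\<rfloor> - 1"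
  have q: "0 < q" "q < 1"
    using K \<epsilon> powr_less_mono[of "- \<epsilon>" 0 K] by (auto simp: q_def)
  have term_le: "delta_seq K (Suc n) powr \<nu> * (delta_seq K (Suc n) + d) powr b
                   \<le> d powr (b + \<nu>) * (q ^ nat \<bar>int n - j\<bar> / q)" for n
  proof -
    define x where "x = delta_seq K (Suc n) / d"
    have x: "x > 0" "delta_seq K (Suc n) = d * x" "delta_seq K (Suc n) + d = d * (1 + x)"
      using K d by (simp_all add: x_def delta_seq_def field_simps)
    have "\<bar>log K x\<bar> \<ge> real (nat \<bar>int n - j\<bar>) - 1"
    proof -
      have "log K x = - real (Suc n) - log K d"
        using K d by (simp add: x_def delta_seq_def log_divide)
      then show ?thesis
        unfolding j_def using floor_correct[of "log K d"] by linarith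
    qed
    then have "K powr (- \<epsilon> * \<bar>log K x\<bar>) \<le> K powr (- \<epsilon> * (real (nat \<bar>int n - j\<bar>) - 1))"
      using K \<epsilon> by (intro powr_mono) auto
    also have "\<dots> = q ^ nat \<bar>int n - j\<bar> / q"
    proof -
      have "q ^ nat \<bar>int n - j\<bar> = K powr (- \<epsilon> * real (nat \<bar>int n - j\<bar>))"
        using K by (simp add: q_def powr_realpow[symmetric] powr_powr mult.commute)
      then show ?thesis
        using K by (simp add: q_def powr_diff[symmetric] algebra_simps powr_minus_divide)
    qed
    finally have "x powr \<nu> * (1 + x) powr b \<le> q ^ nat \<bar>int n - j\<bar> / q"
      using powr_mult_one_plus_powr_le_decay[OF K \<open>x > 0\<close> _ _ \<epsilon>(2,3)] \<epsilon> by linarith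
    moreover have "delta_seq K (Suc n) powr \<nu> * (delta_seq K (Suc n) + d) powr b
                     = d powr (b + \<nu>) * (x powr \<nu> * (1 + x) powr b)"
      using x d by (simp add: powr_mult powr_add mult_ac)
    ultimately show ?thesis by (metis mult_left_mono powr_ge_zero)
  qed
  have "(\<Sum>n<N. delta_seq K (Suc n) powr \<nu> * (delta_seq K (Suc n) + d) powr b)
      \<le> (\<Sum>n<N. d powr (b + \<nu>) * (q ^ nat \<bar>int n - j\<bar> / q))"
    by (intro sum_mono term_le)
  also have "\<dots> = d powr (b + \<nu>) / q * (\<Sum>n<N. q ^ nat \<bar>int n - j\<bar>)"
    by (simp add: sum_distrib_left sum_divide_distrib)
  also have "\<dots> \<le> d powr (b + \<nu>) / q * (2 / (1 - q))"
    using q by (intro mult_left_mono sum_power_abs_diff_le) auto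
  finally show ?thesis by (simp add: mult.commute)
qed

lemma norm_of_real_plus_ge:
  fixes \<delta> :: real and w :: complex
  assumes "\<delta> \<ge> 0" "Re w \<ge> 0"
  shows "norm (of_real \<delta> + w) \<ge> (\<delta> + norm w) / 2"
proof -
  have "\<delta> \<le> Re (of_real \<delta> + w)" using assms by simp
  also have "\<dots> \<le> norm (of_real \<delta> + w)" by (rule complex_Re_le_cmod)
  finally have \<delta>_le: "\<delta> \<le> norm (of_real \<delta> + w)" .
  have "(norm (of_real \<delta> + w))\<^sup>2 = (norm w)\<^sup>2 + \<delta> * (\<delta> + 2 * Re w)"
    unfolding cmod_power2 by (simp add: power2_eq_square algebra_simps)
  then have "(norm w)\<^sup>2 \<le> (norm (of_real \<delta> + w))\<^sup>2"
    using assms by simp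
  then have "norm w \<le> norm (of_real \<delta> + w)" by (rule power2_le_imp_le) simp
  with \<delta>_le have "\<delta> + norm w \<le> 2 * norm (of_real \<delta> + w)" by linarith
  then show ?thesis by simp
qed

lemma norm_shifted_powr_le:
  fixes \<delta> b :: real and z :: complex
  assumes \<delta>: "\<delta> > 0" and z: "norm z < 1" and b: "b \<le> 0"
  shows "norm (of_real (1 + \<delta>) - z) powr b \<le> 2 powr (- b) * (\<delta> + norm (1 - z)) powr b"
proof -
  have "(\<delta> + norm (1 - z)) / 2 \<le> norm (of_real \<delta> + (1 - z))"
    using \<delta> z abs_Re_le_cmod[of z] by (intro norm_of_real_plus_ge) auto
  also have "of_real \<delta> + (1 - z) = of_real (1 + \<delta>) - z" by simp
  finally have "norm (of_real (1 + \<delta>) - z) powr b \<le> ((\<delta> + norm (1 - z)) / 2) powr b"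
    using \<delta> b by (intro powr_mono2') (auto intro: add_pos_nonneg)
  also have "\<dots> = 2 powr (- b) * (\<delta> + norm (1 - z)) powr b"
    using \<delta> by (simp add: powr_divide powr_minus_divide)
  finally show ?thesis .
qed

lemma lacunary_kernel_bound:
  fixes K \<nu> b :: real
  assumes K: "K > 1" and \<nu>: "\<nu> > 0" and b: "b + \<nu> < 0"
  obtains C where "C \<ge> 0" and
    "\<And>N (z :: complex). norm z < 1 \<Longrightarrow> (\<Sum>n<N. delta_seq K (Suc n) powr \<nu> *
        norm (of_real (1 + delta_seq K (Suc n)) - z) powr b) \<le> C * norm (1 - z) powr (b + \<nu>)"
proof -
  define \<epsilon> where "\<epsilon> = min \<nu> (- (b + \<nu>))"
  define q where "q = K powr (- \<epsilon>)"
  have \<epsilon>: "0 < \<epsilon>" "\<epsilon> \<le> \<nu>" "\<epsilon> \<le> - (b + \<nu>)" using \<nu> b by (auto simp: \<epsilon>_def)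
  have q: "0 < q" "q < 1"
    using K \<epsilon> powr_less_mono[of "- \<epsilon>" 0 K] by (auto simp: q_def)
  show thesis
  proof (rule that)
    show "0 \<le> 2 powr (- b) * (2 / (q * (1 - q)))" using q by simp
    fix N and z :: complex
    assume z: "norm z < 1"
    have "(\<Sum>n<N. delta_seq K (Suc n) powr \<nu> * norm (of_real (1 + delta_seq K (Suc n)) - z) powr b)
        \<le> (\<Sum>n<N. delta_seq K (Suc n) powr \<nu> *
              (2 powr (- b) * (delta_seq K (Suc n) + norm (1 - z)) powr b))"
      using z \<nu> b by (intro sum_mono mult_left_mono norm_shifted_powr_le delta_seq_pos K) auto
    also have "\<dots> = 2 powr (- b) *
        (\<Sum>n<N. delta_seq K (Suc n) powr \<nu> * (delta_seq K (Suc n) + norm (1 - z)) powr b)"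
      by (simp add: sum_distrib_left mult_ac)
    also have "\<dots> \<le> 2 powr (- b) * (2 / (q * (1 - q)) * norm (1 - z) powr (b + \<nu>))"
      using z unfolding q_def by (intro mult_left_mono sum_lacunary_kernel_le K \<epsilon>) auto
    finally show "(\<Sum>n<N. delta_seq K (Suc n) powr \<nu> * norm (of_real (1 + delta_seq K (Suc n)) - z) powr b)
        \<le> 2 powr (- b) * (2 / (q * (1 - q))) * norm (1 - z) powr (b + \<nu>)"
      by (simp add: mult.assoc)
  qed
qed

section \<open>Integral means of powers of \<open>|1 - z|\<close>\<close>

lemma sin_ge_third:
  fixes t :: real
  assumes "0 \<le> t" "t \<le> 2"
  shows "t / 3 \<le> sin t"
proof -
  have "(\<Sum>m<3. sin_coeff m * t ^ m) = t"
    by (simp add: eval_nat_numeral sin_coeff_def)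
  then have "\<bar>sin t - t\<bar> \<le> inverse (fact 3) * \<bar>t\<bar> ^ 3"
    using Maclaurin_sin_bound[of t 3] by simp
  also have "\<dots> = t * t\<^sup>2 / 6"
    using assms by (simp add: eval_nat_numeral power3_eq_cube power2_eq_square)
  also have "\<dots> \<le> t * 4 / 6"
    using assms power_mono[of t 2 2] by (intro divide_right_mono mult_left_mono) auto
  finally show ?thesis by linarith
qed

lemma norm_one_minus_cis_ge:
  fixes \<theta> :: real
  assumes "0 \<le> \<theta>" "\<theta> \<le> 2 * pi"
  shows "min \<theta> (2 * pi - \<theta>) / 3 \<le> norm (1 - cis \<theta>)"
proof -
  define t where "t = min (\<theta> / 2) (pi - \<theta> / 2)"
  have t: "0 \<le> t" "t \<le> 2" using assms pi_less_4 by (auto simp: t_def min_def)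
  have "min \<theta> (2 * pi - \<theta>) / 3 = 2 * (t / 3)" by (auto simp: t_def min_def)
  also have "\<dots> \<le> 2 * \<bar>sin t\<bar>" using sin_ge_third[OF t] by simp
  also have "sin t = sin (\<theta> / 2)" by (simp add: t_def min_def)
  also have "2 * \<bar>sin (\<theta> / 2)\<bar> = norm (1 - cis \<theta>)"
    using dist_exp_i_1[of \<theta>] by (simp add: cis_conv_exp norm_minus_commute mult.commute)
  finally show ?thesis .
qed

lemma norm_one_minus_rcis_ge:
  fixes \<theta> r :: real
  assumes "0 \<le> \<theta>" "\<theta> \<le> 2 * pi" "0 \<le> r" "r < 1"
  shows "((1 - r) + min \<theta> (2 * pi - \<theta>) / 3) / 3 \<le> norm (1 - of_real r * cis \<theta>)"
proof -
  have "of_real r * cis \<theta> - cis \<theta> = of_real (r - 1) * cis \<theta>"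
    by (simp add: algebra_simps)
  then have rcis: "norm (of_real r * cis \<theta>) = r" "norm (of_real r * cis \<theta> - cis \<theta>) = 1 - r"
    using assms by (simp_all only: norm_mult norm_of_real norm_cis) simp_all
  have "1 - r \<le> norm (1 - of_real r * cis \<theta>)"
    using norm_triangle_ineq2[of 1 "of_real r * cis \<theta>"] rcis by simp
  moreover have "norm (1 - cis \<theta>) \<le> norm (1 - of_real r * cis \<theta>) + (1 - r)"
    using norm_triangle_ineq[of "1 - of_real r * cis \<theta>" "of_real r * cis \<theta> - cis \<theta>"] rcis
    by simp
  moreover have "min \<theta> (2 * pi - \<theta>) / 3 \<le> norm (1 - cis \<theta>)"
    using assms by (intro norm_one_minus_cis_ge) auto
  ultimately have "(1 - r) + min \<theta> (2 * pi - \<theta>) / 3 \<le> 3 * norm (1 - of_real r * cis \<theta>)"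
    by linarith
  then show ?thesis by simp
qed

lemma has_integral_affine_powr:
  fixes a c Q l u :: real
  assumes "l \<le> u" "c \<noteq> 0" "Q \<noteq> 1" and pos: "\<And>\<theta>. \<theta> \<in> {l..u} \<Longrightarrow> a + c * \<theta> > 0"
  shows "((\<lambda>\<theta>. (a + c * \<theta>) powr (- Q)) has_integral
          ((a + c * u) powr (1 - Q) - (a + c * l) powr (1 - Q)) / (c * (1 - Q))) {l..u}"
proof -
  have "((\<lambda>\<theta>. (a + c * \<theta>) powr (1 - Q) / (c * (1 - Q))) has_vector_derivative
          (a + c * \<theta>) powr (- Q)) (at \<theta> within {l..u})" if \<theta>: "\<theta> \<in> {l..u}" for \<theta>
  proof -
    have "((\<lambda>\<theta>. a + c * \<theta>) has_real_derivative c) (at \<theta>)"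
      by (auto intro!: derivative_eq_intros)
    from DERIV_fun_powr[OF this pos[OF \<theta>], of "1 - Q"]
    have "((\<lambda>\<theta>. (a + c * \<theta>) powr (1 - Q) / (c * (1 - Q))) has_real_derivative
            (1 - Q) * (a + c * \<theta>) powr (1 - Q - of_nat 1) * c / (c * (1 - Q))) (at \<theta>)"
      by (rule DERIV_cdivide)
    then show ?thesis
      using assms by (simp add: has_real_derivative_iff_has_vector_derivative[symmetric]
          has_field_derivative_at_within)
  qed
  from fundamental_theorem_of_calculus[OF \<open>l \<le> u\<close> this] show ?thesis
    by (simp add: diff_divide_distrib)
qed

lemma angular_majorant_integral:
  fixes a Q :: real
  assumes a: "a > 0" and Q: "Q > 1"
  obtains I where
    "((\<lambda>\<theta>. (a + \<theta> / 3) powr (- Q) + (a + (2 * pi - \<theta>) / 3) powr (- Q)) has_integral I) {0..2 * pi}"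
    and "I \<le> 6 / (Q - 1) * a powr (1 - Q)"
proof -
  define b where "b = a + 2 * pi / 3"
  define I where "I = 3 / (Q - 1) * (a powr (1 - Q) - b powr (1 - Q))"
  have eq1: "(\<lambda>\<theta>. (a + \<theta> / 3) powr (- Q)) = (\<lambda>\<theta>. (a + 1 / 3 * \<theta>) powr (- Q))"
    by simp
  have int1: "((\<lambda>\<theta>. (a + 1 / 3 * \<theta>) powr (- Q)) has_integral I) {0..2 * pi}"
    by (rule has_integral_eq_rhs[OF has_integral_affine_powr])
       (use a Q in \<open>auto simp: I_def b_def field_simps\<close>)
  have eq2: "(\<lambda>\<theta>. (a + (2 * pi - \<theta>) / 3) powr (- Q)) = (\<lambda>\<theta>. (b + - 1 / 3 * \<theta>) powr (- Q))"
    by (simp add: b_def diff_divide_distrib add_diff_eq)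
  have int2: "((\<lambda>\<theta>. (b + - 1 / 3 * \<theta>) powr (- Q)) has_integral I) {0..2 * pi}"
  proof -
    have "b + - 1 / 3 * \<theta> > 0" if "\<theta> \<in> {0..2 * pi}" for \<theta>
      using that a by (simp add: b_def)
    then show ?thesis
      by (intro has_integral_eq_rhs[OF has_integral_affine_powr])
         (use Q in \<open>auto simp: I_def b_def field_simps\<close>)
  qed
  from has_integral_add[OF int1[folded eq1] int2[folded eq2]]
  have "((\<lambda>\<theta>. (a + \<theta> / 3) powr (- Q) + (a + (2 * pi - \<theta>) / 3) powr (- Q))
          has_integral (I + I)) {0..2 * pi}" .
  moreover have "I + I \<le> 6 / (Q - 1) * a powr (1 - Q)"
    using Q by (simp add: I_def b_def algebra_simps)
  ultimately show thesis by (rule that)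
qed

lemma norm_one_minus_rcis_powr_le:
  fixes \<theta> r Q :: real
  assumes \<theta>: "0 \<le> \<theta>" "\<theta> \<le> 2 * pi" and r: "0 \<le> r" "r < 1" and Q: "Q \<ge> 0"
  shows "norm (1 - of_real r * cis \<theta>) powr (- Q)
           \<le> 3 powr Q * ((1 - r + \<theta> / 3) powr (- Q) + (1 - r + (2 * pi - \<theta>) / 3) powr (- Q))"
proof -
  define m where "m = min \<theta> (2 * pi - \<theta>)"
  have "m \<ge> 0" using \<theta> by (simp add: m_def)
  then have l: "(1 - r + m / 3) / 3 > 0" using r by simp
  have "norm (1 - of_real r * cis \<theta>) powr (- Q) \<le> ((1 - r + m / 3) / 3) powr (- Q)"
    using norm_one_minus_rcis_ge[OF \<theta> r] l Q by (intro powr_mono2') (auto simp: m_def)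
  also have "\<dots> = 3 powr Q * (1 - r + m / 3) powr (- Q)"
    using l by (simp add: powr_divide powr_minus_divide)
  also have "(1 - r + m / 3) powr (- Q)
      \<le> (1 - r + \<theta> / 3) powr (- Q) + (1 - r + (2 * pi - \<theta>) / 3) powr (- Q)"
    by (simp add: m_def min_def)
  finally show ?thesis by (simp add: mult_left_mono)
qed

lemma integral_le_of_majorant:
  fixes f g :: "'a :: euclidean_space \<Rightarrow> real"
  assumes "(g has_integral I) S" and "\<And>x. x \<in> S \<Longrightarrow> f x \<le> g x" and "I \<le> B" and "0 \<le> B"
  shows "integral S f \<le> B"
proof (cases "f integrable_on S")
  case True
  then have "integral S f \<le> I"
    using assms(1,2) by (intro has_integral_le[OF integrable_integral]) auto
  with assms(3) show ?thesis by linarith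
qed (use assms(4) in \<open>simp add: not_integrable_integral\<close>)

lemma integral_circle_le:
  fixes p c r A :: real and F :: "complex \<Rightarrow> complex"
  assumes p: "p > 0" and cp: "c * p > 1" and r: "0 \<le> r" "r < 1" and A: "A \<ge> 0"
    and F: "\<And>\<theta>. norm (F (of_real r * cis \<theta>)) \<le> A * norm (1 - of_real r * cis \<theta>) powr (- c)"
  shows "integral {0..2 * pi} (\<lambda>\<theta>. norm (F (of_real r * cis \<theta>)) powr p)
           \<le> A powr p * 3 powr (c * p) * (6 / (c * p - 1)) * (1 - r) powr (1 - c * p)"
    (is "integral _ ?f \<le> ?B")
proof -
  define Q where "Q = c * p"
  define g where "g = (\<lambda>\<theta>. A powr p * 3 powr Q *
                        ((1 - r + \<theta> / 3) powr (- Q) + (1 - r + (2 * pi - \<theta>) / 3) powr (- Q)))"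
  obtain I where I: "((\<lambda>\<theta>. (1 - r + \<theta> / 3) powr (- Q) + (1 - r + (2 * pi - \<theta>) / 3) powr (- Q))
                       has_integral I) {0..2 * pi}"
    and I_le: "I \<le> 6 / (Q - 1) * (1 - r) powr (1 - Q)"
    using angular_majorant_integral[of "1 - r" Q] r cp by (auto simp: Q_def)
  have f_le_g: "?f \<theta> \<le> g \<theta>" if "\<theta> \<in> {0..2 * pi}" for \<theta>
  proof -
    have "?f \<theta> \<le> (A * norm (1 - of_real r * cis \<theta>) powr (- c)) powr p"
      using p F[of \<theta>] by (intro powr_mono2) auto
    also have "\<dots> = A powr p * norm (1 - of_real r * cis \<theta>) powr (- Q)"
      using A by (simp add: powr_mult powr_powr Q_def)
    also have "\<dots> \<le> g \<theta>"
      unfolding g_def mult.assoc using that r cp p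
      by (intro mult_left_mono norm_one_minus_rcis_powr_le) (auto simp: Q_def)
    finally show ?thesis .
  qed
  have "A powr p * 3 powr Q * I \<le> A powr p * 3 powr Q * (6 / (Q - 1) * (1 - r) powr (1 - Q))"
    using I_le by (intro mult_left_mono) auto
  then have "A powr p * 3 powr Q * I \<le> ?B"
    by (simp add: Q_def mult_ac)
  moreover have "0 \<le> ?B" using cp by simp
  ultimately show ?thesis
    using f_le_g by (intro integral_le_of_majorant[OF has_integral_mult_right[OF I]])
      (auto simp: g_def)
qed

lemma Mp_le_of_norm_le:
  fixes p c r A :: real and F :: "complex \<Rightarrow> complex"
  assumes p: "p > 0" and cp: "c * p > 1" and r: "0 \<le> r" "r < 1" and A: "A \<ge> 0"
    and F: "\<And>\<theta>. norm (F (of_real r * cis \<theta>)) \<le> A * norm (1 - of_real r * cis \<theta>) powr (- c)"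
  shows "Mp p r F \<le> A * (3 powr (c * p) * (6 / (c * p - 1)) / (2 * pi)) powr (1 / p)
                       * (1 - r) powr (1 / p - c)"
proof -
  define B where "B = 3 powr (c * p) * (6 / (c * p - 1))"
  have B: "B \<ge> 0" using cp by (simp add: B_def)
  have int_nonneg: "0 \<le> integral {0..2 * pi} (\<lambda>\<theta>. norm (F (of_real r * cis \<theta>)) powr p)"
    by (cases "(\<lambda>\<theta>. norm (F (of_real r * cis \<theta>)) powr p) integrable_on {0..2 * pi}")
       (auto intro: integral_nonneg simp: not_integrable_integral)
  have "Mp p r F \<le> (A powr p * B * (1 - r) powr (1 - c * p) / (2 * pi)) powr (1 / p)"
    unfolding Mp_def B_def using integral_circle_le[OF p cp r A F] int_nonneg p
    by (intro powr_mono2 divide_right_mono) (auto simp: mult.assoc)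
  also have "\<dots> = (A powr p) powr (1 / p) * (B / (2 * pi)) powr (1 / p)
                   * ((1 - r) powr (1 - c * p)) powr (1 / p)"
    using A B by (simp add: powr_mult powr_divide)
  also have "\<dots> = A * (B / (2 * pi)) powr (1 / p) * (1 - r) powr (1 / p - c)"
    using A p by (simp add: powr_powr field_simps)
  finally show ?thesis by (simp add: B_def)
qed

lemma H_p_inf_if_norm_le:
  fixes p \<alpha> s A :: real and F :: "complex \<Rightarrow> complex"
  assumes p: "p > 0" and s: "s < \<alpha>" and A: "A \<ge> 0" and hol: "F holomorphic_on unit_disc"
    and F: "\<And>z. norm z < 1 \<Longrightarrow>
              norm (F z) \<le> A * (1 - norm z) powr (- s) * norm (1 - z) powr (- (\<alpha> - s + 1 / p))"
  shows "F \<in> H_p_inf p \<alpha>"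
proof -
  define c where "c = \<alpha> - s + 1 / p"
  define B where "B = (3 powr (c * p) * (6 / (c * p - 1)) / (2 * pi)) powr (1 / p)"
  have cp: "c * p > 1"
  proof -
    have "c * p = (\<alpha> - s) * p + 1" using p by (simp add: c_def field_simps)
    then show ?thesis using p s by simp
  qed
  have "(1 - r) powr \<alpha> * Mp p r F \<le> A * B" if r: "0 \<le> r" "r < 1" for r
  proof -
    have "Mp p r F \<le> A * (1 - r) powr (- s) * B * (1 - r) powr (1 / p - c)"
      unfolding B_def using r A F[of "of_real r * cis _"]
      by (intro Mp_le_of_norm_le p cp) (auto simp: norm_mult c_def)
    also have "\<dots> = A * B * (1 - r) powr (- \<alpha>)"
      by (simp add: c_def powr_add[symmetric])
    finally have "(1 - r) powr \<alpha> * Mp p r F \<le> (1 - r) powr \<alpha> * (A * B * (1 - r) powr (- \<alpha>))"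
      by (intro mult_left_mono) auto
    also have "\<dots> = A * B"
      using r by (simp add: powr_minus field_simps)
    finally show ?thesis .
  qed
  with hol show ?thesis by (auto simp: H_p_inf_def)
qed

section \<open>Holomorphic functions with nonnegative real part\<close>

lemma norm_diff_less_norm_add_cnj:
  fixes w b :: complex
  assumes "Re w > 0" "Re b > 0"
  shows "norm (w - b) < norm (w + cnj b)"
proof -
  have "(Re w + Re b)\<^sup>2 - (Re w - Re b)\<^sup>2 = 4 * Re w * Re b"
    by (simp add: power2_eq_square algebra_simps)
  moreover have "4 * Re w * Re b > 0" using assms by simp
  ultimately have "(Re w - Re b)\<^sup>2 + (Im w - Im b)\<^sup>2 < (Re w + Re b)\<^sup>2 + (Im w - Im b)\<^sup>2"
    by linarith
  then show ?thesis by (simp add: cmod_def real_sqrt_less_mono)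
qed

lemma Cayley_inverse_norm_le:
  fixes q b w :: complex
  assumes "w * (q + cnj b) = q - b" and "norm w < 1"
  shows "norm q * (1 - norm w) \<le> 2 * norm b"
proof -
  have "q * (1 - w) = b + w * cnj b" using assms(1) by (simp add: algebra_simps)
  then have "norm q * norm (1 - w) = norm (b + w * cnj b)" by (metis norm_mult)
  also have "\<dots> \<le> norm b + norm w * norm b"
    by (metis norm_triangle_ineq norm_mult complex_mod_cnj)
  also have "\<dots> \<le> 2 * norm b" using assms(2) by (simp add: mult_left_le_one_le)
  finally have "norm q * norm (1 - w) \<le> 2 * norm b" .
  moreover have "1 - norm w \<le> norm (1 - w)" using norm_triangle_ineq2[of 1 w] by simp
  ultimately show ?thesis by (meson mult_left_mono norm_ge_zero order_trans)
qed

text \<open>Schwarz's lemma for the Cayley transform of \<open>P + 1\<close>, normalised to vanish at \<open>0\<close>.\<close>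
lemma holomorphic_Re_nonneg_norm_le:
  fixes P :: "complex \<Rightarrow> complex"
  assumes hol: "P holomorphic_on unit_disc" and Re: "\<And>z. z \<in> unit_disc \<Longrightarrow> Re (P z) \<ge> 0"
  obtains C where "C \<ge> 0" "\<And>z. norm z < 1 \<Longrightarrow> norm (P z) \<le> C / (1 - norm z)"
proof -
  define b where "b = P 0 + 1"
  define w where "w = (\<lambda>z. (P z + 1 - b) / (P z + 1 + cnj b))"
  have Re_b: "Re b \<ge> 1" using Re[of 0] by (simp add: b_def)
  have Re_Pz: "Re (P z + 1) > 0" if "norm z < 1" for z
    using Re[of z] that by simp
  have den: "P z + 1 + cnj b \<noteq> 0" if "norm z < 1" for z
  proof -
    have "Re (P z + 1 + cnj b) > 0" using Re_Pz[OF that] Re_b by simp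
    then show ?thesis by (metis less_irrefl zero_complex.simps(1))
  qed
  have "w holomorphic_on unit_disc"
    unfolding w_def using den by (intro holomorphic_intros hol) auto
  moreover have "w 0 = 0" by (simp add: w_def b_def)
  moreover have w_lt: "norm (w z) < 1" if "norm z < 1" for z
    using norm_diff_less_norm_add_cnj[OF Re_Pz[OF that], of b] Re_b den[OF that]
    by (simp add: w_def norm_divide divide_less_eq)
  ultimately have w_le: "norm (w z) \<le> norm z" if "norm z < 1" for z
    using Schwarz_Lemma(1) that by fastforce
  show thesis
  proof
    show "0 \<le> 2 * norm b + 1" by simp
    fix z :: complex
    assume z: "norm z < 1"
    define Q where "Q = P z + 1"
    have "w z * (Q + cnj b) = Q - b"
      using den[OF z] by (simp add: w_def Q_def field_simps)
    then have "norm Q * (1 - norm (w z)) \<le> 2 * norm b"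
      using w_lt[OF z] by (rule Cayley_inverse_norm_le)
    moreover have "norm Q * (1 - norm z) \<le> norm Q * (1 - norm (w z))"
      using w_le[OF z] by (intro mult_left_mono) auto
    ultimately have "norm Q * (1 - norm z) \<le> 2 * norm b" by linarith
    then have "norm Q \<le> 2 * norm b / (1 - norm z)" using z by (simp add: le_divide_eq)
    moreover have "norm (P z) \<le> norm Q + 1" using norm_triangle_ineq4[of Q 1] by (simp add: Q_def)
    moreover have "1 \<le> 1 / (1 - norm z)" using z by simp
    ultimately show "norm (P z) \<le> (2 * norm b + 1) / (1 - norm z)"
      by (simp add: add_divide_distrib)
  qed
qed

section \<open>The space \<open>X\<^sub>\<nu>\<^sub>,\<^sub>\<beta>\<close>\<close>

definition f_seq_deriv :: "real \<Rightarrow> real \<Rightarrow> real \<Rightarrow> nat \<Rightarrow> complex \<Rightarrow> complex" where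
  "f_seq_deriv K \<nu> \<beta> n z = - of_real (delta_seq K n powr \<nu> * \<beta>)
      * (of_real (1 + delta_seq K n) - z) powr (of_real \<beta> - 1)"

lemma has_field_derivative_f_seq:
  assumes K: "K > 1" and z: "norm z < 1"
  shows "(f_seq K \<nu> \<beta> n has_field_derivative f_seq_deriv K \<nu> \<beta> n z) (at z)"
proof -
  define c :: complex where "c = of_real (1 + delta_seq K n)"
  have "Re (c - z) > 0"
    using delta_seq_pos[OF K, of n] abs_Re_le_cmod[of z] z by (simp add: c_def)
  then have "c - z \<notin> \<real>\<^sub>\<le>\<^sub>0" by (simp add: complex_nonpos_Reals_iff)
  from DERIV_chain2[OF has_field_derivative_powr[OF this] DERIV_diff[OF DERIV_const DERIV_ident]]
  have "((\<lambda>z. (c - z) powr of_real \<beta>) has_field_derivative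
          of_real \<beta> * (c - z) powr (of_real \<beta> - 1) * (0 - 1)) (at z)" .
  from DERIV_cmult[OF this, of "of_real (delta_seq K n powr \<nu>)"] show ?thesis
    unfolding f_seq_def f_seq_deriv_def c_def by (simp add: mult_ac)
qed

lemma norm_f_seq:
  "norm (f_seq K \<nu> \<beta> n z)
     = delta_seq K n powr \<nu> * norm (of_real (1 + delta_seq K n) - z) powr \<beta>"
  by (simp add: f_seq_def norm_mult norm_powr_real_powr')

lemma norm_f_seq_deriv:
  "norm (f_seq_deriv K \<nu> \<beta> n z)
     = \<bar>\<beta>\<bar> * (delta_seq K n powr \<nu> * norm (of_real (1 + delta_seq K n) - z) powr (\<beta> - 1))"
proof -
  have "norm ((of_real (1 + delta_seq K n) - z) powr (of_real \<beta> - 1))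
      = norm (of_real (1 + delta_seq K n) - z) powr (\<beta> - 1)"
    by (subst norm_powr_real_powr') auto
  then show ?thesis by (simp add: f_seq_deriv_def norm_mult)
qed

lemma norm_f_seq_le:
  assumes K: "K > 1" and \<beta>: "\<beta> \<le> 0" and d: "0 < d" "d \<le> 1 - norm z"
  shows "norm (f_seq K \<nu> \<beta> n z) \<le> (K powr (- \<nu>)) ^ n * d powr \<beta>"
proof -
  have "d \<le> Re (of_real (1 + delta_seq K n) - z)"
    using d delta_seq_pos[OF K, of n] complex_Re_le_cmod[of z] by simp
  also have "\<dots> \<le> norm (of_real (1 + delta_seq K n) - z)" by (rule complex_Re_le_cmod)
  finally show ?thesis
    using d \<beta> by (simp add: norm_f_seq delta_seq_powr[OF K] mult_left_mono powr_mono2')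
qed

lemma norm_sums_le:
  fixes X :: "nat \<Rightarrow> 'a :: real_normed_vector" and w :: "nat \<Rightarrow> real"
  assumes "X sums s" and "\<And>n. norm (X n) \<le> B * w n" and "B \<ge> 0" and "\<And>N. (\<Sum>n<N. w n) \<le> W"
  shows "norm s \<le> B * W"
proof (rule LIMSEQ_le_const2)
  show "(\<lambda>N. norm (\<Sum>n<N. X n)) \<longlonglongrightarrow> norm s"
    using assms(1) by (simp add: sums_def tendsto_norm)
  have "norm (\<Sum>n<N. X n) \<le> B * W" for N
  proof -
    have "norm (\<Sum>n<N. X n) \<le> (\<Sum>n<N. B * w n)"
      by (rule order_trans[OF norm_sum sum_mono]) (rule assms(2))
    also have "\<dots> \<le> B * W"
      using assms(3,4) by (simp add: sum_distrib_left[symmetric] mult_left_mono)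
    finally show ?thesis .
  qed
  then show "\<exists>N0. \<forall>N\<ge>N0. norm (\<Sum>n<N. X n) \<le> B * W" by blast
qed

lemma f_seq_series_locally_dominated:
  fixes a :: "nat \<Rightarrow> complex"
  assumes K: "K > 1" and \<nu>: "\<nu> > 0" and \<beta>: "\<beta> \<le> 0" and A: "\<And>n. norm (a n) \<le> A"
    and x: "x \<in> unit_disc"
  shows "\<exists>d g. 0 < d \<and> summable g \<and> (\<forall>\<^sub>F n in sequentially.
           \<forall>y\<in>ball x d \<inter> unit_disc. norm (a (Suc n) * f_seq K \<nu> \<beta> (Suc n) y) \<le> g n)"
proof (intro exI conjI always_eventually allI ballI)
  define q where "q = K powr (- \<nu>)"
  have q: "0 < q" "q < 1"
    using K \<nu> powr_less_mono[of "- \<nu>" 0 K] by (auto simp: q_def)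
  have A0: "A \<ge> 0" using A norm_ge_zero order_trans by blast
  let ?d = "(1 - norm x) / 2"
  show "0 < ?d" using x by simp
  show "summable (\<lambda>n. A * (q ^ Suc n * ?d powr \<beta>))"
    using q by (simp add: summable_mult summable_mult2 summable_geometric)
  fix n y
  assume "y \<in> ball x ?d \<inter> unit_disc"
  then have "?d \<le> 1 - norm y"
    using norm_triangle_ineq2[of y x] by (auto simp: dist_norm norm_minus_commute)
  then have "norm (f_seq K \<nu> \<beta> (Suc n) y) \<le> q ^ Suc n * ?d powr \<beta>"
    unfolding q_def using x by (intro norm_f_seq_le K \<beta>) auto
  then show "norm (a (Suc n) * f_seq K \<nu> \<beta> (Suc n) y) \<le> A * (q ^ Suc n * ?d powr \<beta>)"
    unfolding norm_mult using A A0 by (intro mult_mono) auto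
qed

lemma X_space_series:
  assumes K: "K > 1" and \<nu>: "\<nu> > 0" and \<beta>: "\<beta> \<le> 0" and h: "h \<in> X_space K \<nu> \<beta>"
  obtains a A where "\<And>n. norm (a n) \<le> A" and "h holomorphic_on unit_disc"
    and "\<And>z. z \<in> unit_disc \<Longrightarrow> (\<lambda>n. a (Suc n) * f_seq K \<nu> \<beta> (Suc n) z) sums h z"
    and "\<And>z. z \<in> unit_disc \<Longrightarrow> (\<lambda>n. a (Suc n) * f_seq_deriv K \<nu> \<beta> (Suc n) z) sums deriv h z"
proof -
  obtain a where "bounded (range a)"
    and h_sums: "\<And>z. z \<in> unit_disc \<Longrightarrow> (\<lambda>n. a (Suc n) * f_seq K \<nu> \<beta> (Suc n) z) sums h z"
    using h by (auto simp: X_space_def)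
  then obtain A where A: "\<And>n. norm (a n) \<le> A" by (auto simp: bounded_iff)
  define F where "F = (\<lambda>n z. a (Suc n) * f_seq K \<nu> \<beta> (Suc n) z)"
  define F' where "F' = (\<lambda>n z. a (Suc n) * f_seq_deriv K \<nu> \<beta> (Suc n) z)"
  have F_deriv: "(F n has_field_derivative F' n z) (at z)" if "z \<in> unit_disc" for n z
    unfolding F_def F'_def using that by (intro DERIV_cmult has_field_derivative_f_seq K) auto
  have F_dominated: "\<exists>d g. 0 < d \<and> summable g \<and>
      (\<forall>\<^sub>F n in sequentially. \<forall>y\<in>ball x d \<inter> unit_disc. norm (F n y) \<le> g n)"
    if "x \<in> unit_disc" for x
    unfolding F_def by (rule f_seq_series_locally_dominated[OF K \<nu> \<beta> A that])
  obtain g g' where g: "\<And>z. z \<in> unit_disc \<Longrightarrow>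
      (\<lambda>n. F n z) sums g z \<and> (\<lambda>n. F' n z) sums g' z \<and> (g has_field_derivative g' z) (at z)"
    using series_and_derivative_comparison_local[OF open_ball F_deriv F_dominated] by blast
  have h_eq_g: "h z = g z" if "z \<in> unit_disc" for z
    using g[OF that] h_sums[OF that] unfolding F_def by (meson sums_unique2)
  have h_deriv: "(h has_field_derivative g' z) (at z)" if "z \<in> unit_disc" for z
    using g[OF that] h_eq_g that
    by (intro has_field_derivative_transform_within_open[of g "g' z" z unit_disc h]) auto
  show thesis
  proof (rule that[OF A])
    show "h holomorphic_on unit_disc"
      using h_deriv by (subst holomorphic_on_open) blast+
    show "(\<lambda>n. a (Suc n) * f_seq_deriv K \<nu> \<beta> (Suc n) z) sums deriv h z" if "z \<in> unit_disc" for z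
      using g[OF that] DERIV_imp_deriv[OF h_deriv[OF that]] by (simp add: F'_def)
  qed (rule h_sums)
qed

lemma X_space_growth:
  assumes K: "K > 1" and \<nu>: "\<nu> > 0" and \<beta>: "\<beta> + \<nu> < 0" and h: "h \<in> X_space K \<nu> \<beta>"
  obtains C where "C \<ge> 0" and "h holomorphic_on unit_disc"
    and "\<And>z. norm z < 1 \<Longrightarrow> norm (h z) \<le> C * norm (1 - z) powr (\<beta> + \<nu>)"
    and "\<And>z. norm z < 1 \<Longrightarrow> norm (deriv h z) \<le> C * norm (1 - z) powr (\<beta> - 1 + \<nu>)"
proof -
  have "\<beta> \<le> 0" using \<nu> \<beta> by linarith
  obtain a A where A: "\<And>n. norm (a n) \<le> A" and hol: "h holomorphic_on unit_disc"
    and h_sums: "\<And>z. z \<in> unit_disc \<Longrightarrow> (\<lambda>n. a (Suc n) * f_seq K \<nu> \<beta> (Suc n) z) sums h z"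
    and dh_sums: "\<And>z. z \<in> unit_disc \<Longrightarrow>
                    (\<lambda>n. a (Suc n) * f_seq_deriv K \<nu> \<beta> (Suc n) z) sums deriv h z"
    using X_space_series[OF K \<nu> \<open>\<beta> \<le> 0\<close> h] by blast
  have A0: "A \<ge> 0" using A[of 0] by (meson norm_ge_zero order_trans)
  obtain C0 where "C0 \<ge> 0" and C0: "\<And>N (z :: complex). norm z < 1 \<Longrightarrow>
      (\<Sum>n<N. delta_seq K (Suc n) powr \<nu> * norm (of_real (1 + delta_seq K (Suc n)) - z) powr \<beta>)
        \<le> C0 * norm (1 - z) powr (\<beta> + \<nu>)"
    using lacunary_kernel_bound[OF K \<nu> \<beta>] by blast
  have "\<beta> - 1 + \<nu> < 0" using \<beta> by simp
  obtain C1 where "C1 \<ge> 0" and C1: "\<And>N (z :: complex). norm z < 1 \<Longrightarrow>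
      (\<Sum>n<N. delta_seq K (Suc n) powr \<nu> * norm (of_real (1 + delta_seq K (Suc n)) - z) powr (\<beta> - 1))
        \<le> C1 * norm (1 - z) powr (\<beta> - 1 + \<nu>)"
    using lacunary_kernel_bound[OF K \<nu> \<open>\<beta> - 1 + \<nu> < 0\<close>] by blast
  define C where "C = max (A * C0) (A * \<bar>\<beta>\<bar> * C1)"
  show thesis
  proof (rule that[OF _ hol])
    show "C \<ge> 0" using A0 \<open>C0 \<ge> 0\<close> by (simp add: C_def le_max_iff_disj)
    fix z :: complex
    assume z: "norm z < 1"
    then have z': "z \<in> unit_disc" by simp
    have "norm (h z) \<le> A * (C0 * norm (1 - z) powr (\<beta> + \<nu>))"
      using A by (intro norm_sums_le[OF h_sums[OF z'] _ A0 C0[OF z]])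
        (simp add: norm_mult norm_f_seq mult_right_mono)
    then show "norm (h z) \<le> C * norm (1 - z) powr (\<beta> + \<nu>)"
      by (rule order_trans) (simp add: C_def mult_right_mono flip: mult.assoc)
    have "norm (deriv h z) \<le> A * \<bar>\<beta>\<bar> * (C1 * norm (1 - z) powr (\<beta> - 1 + \<nu>))"
      using A A0 by (intro norm_sums_le[OF dh_sums[OF z'] _ _ C1[OF z]])
        (auto simp: norm_mult norm_f_seq_deriv mult_right_mono mult.assoc)
    then show "norm (deriv h z) \<le> C * norm (1 - z) powr (\<beta> - 1 + \<nu>)"
      by (rule order_trans) (simp add: C_def mult_right_mono flip: mult.assoc)
  qed
qed

lemma generator_deriv_in_H_p_inf:
  fixes p \<alpha> C :: real and P h :: "complex \<Rightarrow> complex"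
  assumes p: "p > 0" and \<alpha>: "\<alpha> > 1" and C: "C \<ge> 0"
    and hol_P: "P holomorphic_on unit_disc" and Re_P: "\<And>z. z \<in> unit_disc \<Longrightarrow> Re (P z) \<ge> 0"
    and hol_h: "h holomorphic_on unit_disc"
    and dh: "\<And>z. norm z < 1 \<Longrightarrow> norm (deriv h z) \<le> C * norm (1 - z) powr (- (\<alpha> + 1 / p) - 1)"
  shows "(\<lambda>z. (1 - z)^2 * P z * deriv h z) \<in> H_p_inf p \<alpha>"
proof -
  obtain CP where "CP \<ge> 0" and CP: "\<And>z. norm z < 1 \<Longrightarrow> norm (P z) \<le> CP / (1 - norm z)"
    using holomorphic_Re_nonneg_norm_le[OF hol_P Re_P] by blast
  show ?thesis
  proof (rule H_p_inf_if_norm_le[where s = 1 and A = "CP * C"])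
    show "(\<lambda>z. (1 - z)^2 * P z * deriv h z) holomorphic_on unit_disc"
      by (intro holomorphic_intros hol_P holomorphic_deriv hol_h) auto
    fix z :: complex
    assume z: "norm z < 1"
    then have "norm (1 - z) > 0" by auto
    then have "norm (1 - z)^2 = norm (1 - z) powr 2" by simp
    moreover have "2 + (- (\<alpha> + 1 / p) - 1) = - (\<alpha> - 1 + 1 / p)" by simp
    ultimately have pw: "norm (1 - z)^2 * norm (1 - z) powr (- (\<alpha> + 1 / p) - 1)
                           = norm (1 - z) powr (- (\<alpha> - 1 + 1 / p))"
      by (simp only: powr_add[symmetric])
    have "norm ((1 - z)^2 * P z * deriv h z) = norm (1 - z)^2 * norm (P z) * norm (deriv h z)"
      by (simp add: norm_mult norm_power)
    also have "\<dots> \<le> norm (1 - z)^2 * (CP / (1 - norm z))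
                      * (C * norm (1 - z) powr (- (\<alpha> + 1 / p) - 1))"
      using CP[OF z] dh[OF z] \<open>CP \<ge> 0\<close> z by (intro mult_mono mult_left_mono) auto
    also have "\<dots> = CP * C * (1 - norm z) powr (- 1)
                      * (norm (1 - z)^2 * norm (1 - z) powr (- (\<alpha> + 1 / p) - 1))"
      using z by (simp add: powr_minus_divide)
    also have "\<dots> = CP * C * (1 - norm z) powr (- 1) * norm (1 - z) powr (- (\<alpha> - 1 + 1 / p))"
      by (simp only: pw)
    finally show "norm ((1 - z)^2 * P z * deriv h z)
                    \<le> CP * C * (1 - norm z) powr (- 1) * norm (1 - z) powr (- (\<alpha> - 1 + 1 / p))" .
  qed (use p \<alpha> \<open>CP \<ge> 0\<close> C in auto)
qed

theorem proposition6p8: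
  fixes p \<alpha> \<beta> \<nu> :: real
  assumes "0 < p" and "\<alpha> > 1" and "\<beta> * p < -1"
    and "\<nu> = - (\<alpha> + \<beta> + 1 / p)" and "\<nu> > 0"
  shows "\<exists>K0>1. \<forall>K\<ge>K0. \<forall>(\<phi> :: real \<Rightarrow> complex \<Rightarrow> complex) (P :: complex \<Rightarrow> complex).
           analytic_semigroup \<phi> \<and> denjoy_wolff_point \<phi> 1 \<and>
           P holomorphic_on unit_disc \<and> (\<forall>z\<in>unit_disc. Re (P z) \<ge> 0) \<and>
           infinitesimal_generator \<phi> (\<lambda>z. (1 - z)^2 * P z)
           \<longrightarrow> X_space K \<nu> \<beta> \<subseteq> E_space p \<alpha> P"
proof (intro exI[of _ 2] conjI allI impI subsetI)
  fix K :: real and \<phi> :: "real \<Rightarrow> complex \<Rightarrow> complex" and P :: "complex \<Rightarrow> complex" and h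
  assume "K \<ge> 2" and hyps: "analytic_semigroup \<phi> \<and> denjoy_wolff_point \<phi> 1 \<and>
           P holomorphic_on unit_disc \<and> (\<forall>z\<in>unit_disc. Re (P z) \<ge> 0) \<and>
           infinitesimal_generator \<phi> (\<lambda>z. (1 - z)^2 * P z)"
    and h: "h \<in> X_space K \<nu> \<beta>"
  have K: "K > 1" using \<open>K \<ge> 2\<close> by simp
  have decay: "\<beta> + \<nu> = - (\<alpha> + 1 / p)" and decay': "\<beta> - 1 + \<nu> = - (\<alpha> + 1 / p) - 1"
    using assms(4) by simp_all
  moreover have "\<alpha> + 1 / p > 0" using assms(1,2) by (simp add: add_pos_pos)
  ultimately have "\<beta> + \<nu> < 0" by simp
  from X_space_growth[OF K assms(5) this h, unfolded decay decay']
  obtain C where "C \<ge> 0" and hol: "h holomorphic_on unit_disc"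
    and h_le: "\<And>z. norm z < 1 \<Longrightarrow> norm (h z) \<le> C * norm (1 - z) powr (- (\<alpha> + 1 / p))"
    and dh_le: "\<And>z. norm z < 1 \<Longrightarrow> norm (deriv h z) \<le> C * norm (1 - z) powr (- (\<alpha> + 1 / p) - 1)"
    by blast
  show "h \<in> E_space p \<alpha> P"
    unfolding E_space_def
  proof (intro CollectI conjI)
    show "h \<in> H_p_inf p \<alpha>"
      using h_le \<open>C \<ge> 0\<close> assms(1,2) hol
      by (intro H_p_inf_if_norm_le[where s = 0 and A = C]) auto
    show "(\<lambda>z. (1 - z)^2 * P z * deriv h z) \<in> H_p_inf p \<alpha>"
      using dh_le hyps \<open>C \<ge> 0\<close> assms(1,2) hol
      by (intro generator_deriv_in_H_p_inf) auto
  qed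
qed (simp)

end
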